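(* Let $V:\mathbb{R}\to\mathbb{R}$ be $d$-periodic, let $\Gamma(x)=\Gamma_{+}\,\chi_{[0,\infty)}(x)+\Gamma_{-}\,\chi_{(-\infty,0)}(x)$ with $\Gamma_\pm\in\mathbb{R}$, let $\mu_s\in\mathbb{R}$, and let $\phi_s:\mathbb{R}\to\mathbb{R}$ be an exponentially localized solution of $\phi''+\mu_s\phi-V(x)\phi+\Gamma(x)\phi^3=0$ on $\mathbb{R}$. Consider the operator $$\mathbb{L}:=-i\begin{pmatrix}-\partial_x^2-\mu_s+V(x)-2\Gamma(x)\phi_s^2 & -\Gamma(x)\phi_s^2\\ \Gamma(x)\phi_s^2 & \partial_x^2+\mu_s-V(x)+2\Gamma(x)\phi_s^2\end{pmatrix}$$ acting on pairs $(u_1,u_2)$ of functions on $\mathbb{R}$. Then every eigenvalue $\lambda\in\sigma_{\mathrm{disc}}(\mathbb{L})$ satisfies $$|\mathrm{Re}(\lambda)|\le \|\Gamma\|_\infty\,\|\phi_s\|_\infty^2 .$$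
   Context: $\chi_I$ denotes the indicator function of $I$. $\sigma_{\mathrm{disc}}(\mathbb{L})$ is the set of isolated eigenvalues of $\mathbb{L}$ in $L^2(\mathbb{R})\times L^2(\mathbb{R})$, i.e. $\lambda\in\mathbb{C}$ for which there is a nonzero $(u_1,u_2)\in H^2(\mathbb{R})^2$ with $\mathbb{L}(u_1,u_2)^T=\lambda(u_1,u_2)^T$. *)

theory Defs
  imports "HOL-Analysis.Analysis"
begin

definition L2fun :: "(real \<Rightarrow> 'a::{real_normed_vector, second_countable_topology}) \<Rightarrow> bool" where
  "L2fun f \<longleftrightarrow> f \<in> borel_measurable lborel \<and> integrable lborel (\<lambda>x. (norm (f x))^2)"

text \<open>u belongs to H^2(R) with (weak) first derivative du and second derivative ddu:
  u is differentiable with derivative du, du is locally absolutely continuous with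
  derivative ddu (fundamental theorem of calculus), and u, du, ddu are all in L^2.\<close>
definition H2_with :: "(real \<Rightarrow> complex) \<Rightarrow> (real \<Rightarrow> complex) \<Rightarrow> (real \<Rightarrow> complex) \<Rightarrow> bool" where
  "H2_with u du ddu \<longleftrightarrow>
     (\<forall>x. (u has_vector_derivative du x) (at x)) \<and>
     (\<forall>a b. a \<le> b \<longrightarrow> (ddu has_integral (du b - du a)) {a..b}) \<and>
     L2fun u \<and> L2fun du \<and> L2fun ddu"

definition Gam :: "real \<Rightarrow> real \<Rightarrow> real \<Rightarrow> real" where
  "Gam Gp Gm x = Gp * indicator {0..} x + Gm * indicator {..<0} x"

definition sup_norm :: "(real \<Rightarrow> real) \<Rightarrow> real" where
  "sup_norm f = Sup (range (\<lambda>x. \<bar>f x\<bar>))"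

definition periodic_with :: "real \<Rightarrow> (real \<Rightarrow> real) \<Rightarrow> bool" where
  "periodic_with d V \<longleftrightarrow> d > 0 \<and> (\<forall>x. V (x + d) = V x)"

definition exp_localized :: "(real \<Rightarrow> real) \<Rightarrow> bool" where
  "exp_localized \<phi> \<longleftrightarrow> (\<exists>C \<kappa>. \<kappa> > 0 \<and> (\<forall>x. \<bar>\<phi> x\<bar> \<le> C * exp (- \<kappa> * \<bar>x\<bar>)))"

definition stationary_solution ::
  "(real \<Rightarrow> real) \<Rightarrow> (real \<Rightarrow> real) \<Rightarrow> real \<Rightarrow> (real \<Rightarrow> real) \<Rightarrow> bool" where
  "stationary_solution V G \<mu> \<phi> \<longleftrightarrow>
     (\<exists>d\<phi> dd\<phi>. (\<forall>x. (\<phi> has_real_derivative d\<phi> x) (at x)) \<and>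
        (\<forall>a b. a \<le> b \<longrightarrow> (dd\<phi> has_integral (d\<phi> b - d\<phi> a)) {a..b}) \<and>
        (AE x in lborel. dd\<phi> x + \<mu> * \<phi> x - V x * \<phi> x + G x * (\<phi> x)^3 = 0))"

text \<open>Eigenvalues of the linearized operator L with eigenfunctions in H^2(R) x H^2(R).\<close>
definition disc_spec ::
  "(real \<Rightarrow> real) \<Rightarrow> (real \<Rightarrow> real) \<Rightarrow> real \<Rightarrow> (real \<Rightarrow> real) \<Rightarrow> complex set" where
  "disc_spec V G \<mu> \<phi> = {lam. \<exists>u1 du1 ddu1 u2 du2 ddu2.
      H2_with u1 du1 ddu1 \<and> H2_with u2 du2 ddu2 \<and>
      \<not> (AE x in lborel. u1 x = 0 \<and> u2 x = 0) \<and>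
      (AE x in lborel.
         - \<i> * (- ddu1 x - of_real \<mu> * u1 x + of_real (V x) * u1 x
                 - of_real (2 * G x * (\<phi> x)^2) * u1 x - of_real (G x * (\<phi> x)^2) * u2 x)
           = lam * u1 x \<and>
         - \<i> * (of_real (G x * (\<phi> x)^2) * u1 x + ddu2 x + of_real \<mu> * u2 x
                 - of_real (V x) * u2 x + of_real (2 * G x * (\<phi> x)^2) * u2 x)
           = lam * u2 x)}"

end

theory Submission
  imports Defs
begin

text \<open>Pair the first eigenvalue equation with \<open>u\<^sub>1\<close>, the second with \<open>u\<^sub>2\<close>, and take imaginary
  parts: all terms with real coefficients cancel, and so do the second-derivative terms, because
  \<open>\<integral> Im (u'' conj u) = 0\<close> for \<open>u \<in> H\<^sup>2\<close> (on \<open>[a, b]\<close> it is the boundary term \<open>Im (u' conj u)\<close>, an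
  integrable function with limits at \<open>\<plusminus>\<infinity>\<close>, which therefore vanish). What remains is
  \<open>Re \<lambda> \<integral> (|u\<^sub>1|\<^sup>2 + |u\<^sub>2|\<^sup>2) = \<integral> 2 \<Gamma> \<phi>\<^sup>2 Im (u\<^sub>1 conj u\<^sub>2)\<close>, and \<open>2 |Im (u\<^sub>1 conj u\<^sub>2)| \<le> |u\<^sub>1|\<^sup>2 + |u\<^sub>2|\<^sup>2\<close>.\<close>

lemma borel_measurable_cnj [measurable]:
  "g \<in> borel_measurable M \<Longrightarrow> (\<lambda>x. cnj (g x :: complex)) \<in> borel_measurable M"
  by (rule borel_measurable_continuous_on[where f = cnj]) (simp add: continuous_on_cnj continuous_on_id)

lemma two_abs_Im_mult_cnj_le: "2 * \<bar>Im (z * cnj w)\<bar> \<le> (norm z)\<^sup>2 + (norm w)\<^sup>2"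
proof -
  have "\<bar>Im (z * cnj w)\<bar> \<le> norm z * norm w"
    using abs_Im_le_cmod[of "z * cnj w"] by (simp add: norm_mult)
  then show ?thesis
    using sum_squares_bound[of "norm z" "norm w"] by linarith
qed

lemma emeasure_lborel_atLeast: "emeasure lborel {a::real..} = \<infinity>"
proof (rule ccontr)
  assume "emeasure lborel {a..} \<noteq> \<infinity>"
  then obtain n :: nat where "emeasure lborel {a..} < of_nat n"
    using ennreal_Ex_less_of_nat by (auto simp: less_top[symmetric])
  moreover have "emeasure lborel {a..a + real n} \<le> emeasure lborel {a..}"
    by (rule emeasure_mono) auto
  ultimately show False
    by (simp add: ennreal_of_nat_eq_real_of_nat)
qed

lemma integrable_tendsto_at_top_imp_zero:
  fixes g :: "real \<Rightarrow> real"
  assumes "integrable lborel g" and "(g \<longlongrightarrow> L) at_top"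
  shows "L = 0"
proof (rule ccontr)
  assume "L \<noteq> 0"
  have "((\<lambda>x. \<bar>g x\<bar>) \<longlongrightarrow> \<bar>L\<bar>) at_top"
    using assms(2) by (rule tendsto_rabs)
  then have "eventually (\<lambda>x. \<bar>L\<bar> / 2 < \<bar>g x\<bar>) at_top"
    by (rule order_tendstoD(1)) (use \<open>L \<noteq> 0\<close> in simp)
  then obtain M where M: "\<And>x. x \<ge> M \<Longrightarrow> \<bar>L\<bar> / 2 < \<bar>g x\<bar>"
    by (auto simp: eventually_at_top_linorder)
  have "integrable lborel (\<lambda>x. (\<bar>L\<bar> / 2) * indicator {M..} x :: real)"
  proof (rule Bochner_Integration.integrable_bound)
    show "integrable lborel (\<lambda>x. \<bar>g x\<bar>)"
      using assms(1) by simp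
    show "AE x in lborel. norm ((\<bar>L\<bar> / 2) * indicator {M..} x :: real) \<le> norm \<bar>g x\<bar>"
    proof (rule AE_I2)
      fix x
      show "norm ((\<bar>L\<bar> / 2) * indicator {M..} x :: real) \<le> norm \<bar>g x\<bar>"
        using M[of x] by (cases "M \<le> x") auto
    qed
  qed simp
  then have "integrable lborel (indicator {M..} :: real \<Rightarrow> real)"
    using \<open>L \<noteq> 0\<close> by (subst (asm) integrable_mult_left_iff) auto
  then have "emeasure lborel {M..} < \<infinity>"
    by (simp add: integrable_indicator_iff)
  then show False
    by (simp add: emeasure_lborel_atLeast)
qed

lemma integrable_tendsto_at_bot_imp_zero:
  fixes g :: "real \<Rightarrow> real"
  assumes "integrable lborel g" and "(g \<longlongrightarrow> L) at_bot"
  shows "L = 0"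
proof (rule integrable_tendsto_at_top_imp_zero)
  show "integrable lborel (\<lambda>x. g (- x))"
    using assms(1) lborel_integrable_real_affine_iff[of "-1" g 0] by simp
  show "((\<lambda>x. g (- x)) \<longlongrightarrow> L) at_top"
    using assms(2) by (simp add: filterlim_at_bot_mirror)
qed

lemma integral_eq_0_if_integrable_primitive:
  fixes k g :: "real \<Rightarrow> real"
  assumes k: "integrable lborel k" and g: "integrable lborel g"
    and primitive: "\<And>a b. a \<le> b \<Longrightarrow> (LINT x:{a..b}|lborel. k x) = g b - g a"
  shows "(\<integral>x. k x \<partial>lborel) = 0"
proof -
  have k_pos: "set_integrable lborel {0..} k" and k_neg: "set_integrable lborel {..0} k"
    unfolding set_integrable_def by (intro integrable_mult_indicator k; simp)+
  have "((\<lambda>b. g 0 + (LINT x:{0..b}|lborel. k x)) \<longlongrightarrow> g 0 + (LINT x:{0..}|lborel. k x)) at_top"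
    by (intro tendsto_add tendsto_const tendsto_set_lebesgue_integral_at_top k_pos) auto
  moreover have "eventually (\<lambda>b. g 0 + (LINT x:{0..b}|lborel. k x) = g b) at_top"
    using primitive by (intro eventually_at_top_linorderI[of 0]) simp
  ultimately have "(g \<longlongrightarrow> g 0 + (LINT x:{0..}|lborel. k x)) at_top"
    by (rule Lim_transform_eventually)
  then have pos: "g 0 + (LINT x:{0..}|lborel. k x) = 0"
    by (rule integrable_tendsto_at_top_imp_zero[OF g])
  have "((\<lambda>a. g 0 - (LINT x:{a..0}|lborel. k x)) \<longlongrightarrow> g 0 - (LINT x:{..0}|lborel. k x)) at_bot"
    by (intro tendsto_diff tendsto_const tendsto_set_lebesgue_integral_at_bot k_neg) auto
  moreover have "eventually (\<lambda>a. g 0 - (LINT x:{a..0}|lborel. k x) = g a) at_bot"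
    using primitive by (intro eventually_at_bot_linorderI[of 0]) simp
  ultimately have "(g \<longlongrightarrow> g 0 - (LINT x:{..0}|lborel. k x)) at_bot"
    by (rule Lim_transform_eventually)
  then have neg: "g 0 - (LINT x:{..0}|lborel. k x) = 0"
    by (rule integrable_tendsto_at_bot_imp_zero[OF g])
  have "{..0} \<union> {0..} = (UNIV :: real set)"
    by auto
  then have "(\<integral>x. k x \<partial>lborel) = (LINT x:{..0} \<union> {0..}|lborel. k x)"
    by (simp add: set_lebesgue_integral_def)
  also have "\<dots> = (LINT x:{..0}|lborel. k x) + (LINT x:{0..}|lborel. k x)"
  proof (rule set_integral_Un_AE)
    show "AE x in lborel. \<not> (x \<in> {..0::real} \<and> x \<in> {0..})"
      by (rule eventually_mono[OF AE_lborel_singleton[of "0::real"]]) auto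
  qed (use k_neg k_pos in simp_all)
  finally show ?thesis
    using pos neg by simp
qed

lemma integrable_pair_lborel_mult:
  fixes f g :: "real \<Rightarrow> complex"
  assumes f: "integrable lborel f" and g: "integrable lborel g"
  shows "integrable (lborel \<Otimes>\<^sub>M lborel) (\<lambda>p. f (fst p) * g (snd p))"
proof (rule lborel_pair.Fubini_integrable)
  have [measurable]: "f \<in> borel_measurable lborel" "g \<in> borel_measurable lborel"
    using f g by (simp_all add: borel_measurable_integrable)
  show "(\<lambda>p. f (fst p) * g (snd p)) \<in> borel_measurable (lborel \<Otimes>\<^sub>M lborel)"
    by measurable
  show "integrable lborel (\<lambda>x. \<integral>y. norm (f (fst (x, y)) * g (snd (x, y))) \<partial>lborel)"
    using f by (simp add: norm_mult)
  show "AE x in lborel. integrable lborel (\<lambda>y. f (fst (x, y)) * g (snd (x, y)))"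
    using g by simp
qed

lemma set_integral_Icc_triangle_swap:
  fixes f g :: "real \<Rightarrow> complex"
  assumes f: "set_integrable lborel {a..b} f" and g: "set_integrable lborel {a..b} g"
  shows "(LINT t:{a..b}|lborel. (LINT s:{a..t}|lborel. f s) * g t)
           = (LINT s:{a..b}|lborel. f s * (LINT t:{s..b}|lborel. g t))"
proof -
  define h where "h s t = (if a \<le> s \<and> s \<le> t \<and> t \<le> b then f s * g t else 0)" for s t
  have fi: "integrable lborel (\<lambda>s. indicator {a..b} s *\<^sub>R f s)"
    and gi: "integrable lborel (\<lambda>t. indicator {a..b} t *\<^sub>R g t)"
    using f g by (simp_all add: set_integrable_def)
  define P where "P p = (indicator {a..b} (fst p) *\<^sub>R f (fst p)) * (indicator {a..b} (snd p) *\<^sub>R g (snd p))"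
    for p :: "real \<times> real"
  have P_int: "integrable (lborel \<Otimes>\<^sub>M lborel) P"
    unfolding P_def by (rule integrable_pair_lborel_mult[OF fi gi])
  then have [measurable]: "P \<in> borel_measurable (lborel \<Otimes>\<^sub>M lborel)"
    by (rule borel_measurable_integrable)
  have h_P: "case_prod h = (\<lambda>p. indicator {p. fst p \<le> snd p} p *\<^sub>R P p)"
    by (auto simp: h_def P_def fun_eq_iff indicator_def)
  have h_int: "integrable (lborel \<Otimes>\<^sub>M lborel) (case_prod h)"
  proof (rule Bochner_Integration.integrable_bound[OF P_int])
    show "case_prod h \<in> borel_measurable (lborel \<Otimes>\<^sub>M lborel)"
      unfolding h_P by measurable
    show "AE p in lborel \<Otimes>\<^sub>M lborel. norm (case_prod h p) \<le> norm (P p)"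
      unfolding h_P by (rule AE_I2) (simp add: indicator_def)
  qed
  have inner_s: "(\<integral>s. h s t \<partial>lborel) = indicator {a..b} t *\<^sub>R ((LINT s:{a..t}|lborel. f s) * g t)" for t
  proof (cases "t \<in> {a..b}")
    case True
    then have "(\<lambda>s. h s t) = (\<lambda>s. (indicator {a..t} s *\<^sub>R f s) * g t)"
      by (auto simp: h_def fun_eq_iff indicator_def)
    then show ?thesis
      using True by (simp only: integral_mult_left_zero) (simp add: set_lebesgue_integral_def)
  next
    case False
    then have "(\<lambda>s. h s t) = (\<lambda>s. 0)"
      by (auto simp: h_def fun_eq_iff)
    then show ?thesis
      using False by simp
  qed
  have inner_t: "(\<integral>t. h s t \<partial>lborel) = indicator {a..b} s *\<^sub>R (f s * (LINT t:{s..b}|lborel. g t))" for s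
  proof (cases "s \<in> {a..b}")
    case True
    then have "(\<lambda>t. h s t) = (\<lambda>t. f s * (indicator {s..b} t *\<^sub>R g t))"
      by (auto simp: h_def fun_eq_iff indicator_def)
    then show ?thesis
      using True by (simp only: integral_mult_right_zero) (simp add: set_lebesgue_integral_def)
  next
    case False
    then have "(\<lambda>t. h s t) = (\<lambda>t. 0)"
      by (auto simp: h_def fun_eq_iff)
    then show ?thesis
      using False by simp
  qed
  show ?thesis
    using lborel_pair.Fubini_integral[OF h_int]
    by (simp only: inner_s inner_t set_lebesgue_integral_def)
qed

text \<open>\<open>F\<close> and \<open>G\<close> are only required to be absolutely continuous, not differentiable: the identity
  comes from swapping the order of integration over the triangle \<open>a \<le> s \<le> t \<le> b\<close>.\<close>

lemma set_integral_by_parts_Icc: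
  fixes f g F G :: "real \<Rightarrow> complex"
  assumes f: "set_integrable lborel {a..b} f" and g: "set_integrable lborel {a..b} g"
    and Fg: "set_integrable lborel {a..b} (\<lambda>t. F t * g t)"
    and fG: "set_integrable lborel {a..b} (\<lambda>s. f s * G s)"
    and F: "\<And>t. t \<in> {a..b} \<Longrightarrow> (LINT s:{a..t}|lborel. f s) = F t - F a"
    and G: "\<And>s. s \<in> {a..b} \<Longrightarrow> (LINT t:{s..b}|lborel. g t) = G b - G s"
    and "a \<le> b"
  shows "(LINT t:{a..b}|lborel. F t * g t) + (LINT s:{a..b}|lborel. f s * G s)
           = F b * G b - F a * G a"
proof -
  have "(LINT t:{a..b}|lborel. F t * g t) - F a * (G b - G a)
      = (LINT t:{a..b}|lborel. (F t - F a) * g t)"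
    using Fg g G[of a] \<open>a \<le> b\<close>
    by (simp add: left_diff_distrib set_integral_diff set_integral_mult_right)
  also have "\<dots> = (LINT t:{a..b}|lborel. (LINT s:{a..t}|lborel. f s) * g t)"
    using F by (intro set_lebesgue_integral_cong) auto
  also have "\<dots> = (LINT s:{a..b}|lborel. f s * (LINT t:{s..b}|lborel. g t))"
    using f g by (rule set_integral_Icc_triangle_swap)
  also have "\<dots> = (LINT s:{a..b}|lborel. f s * (G b - G s))"
    using G by (intro set_lebesgue_integral_cong) auto
  also have "\<dots> = (F b - F a) * G b - (LINT s:{a..b}|lborel. f s * G s)"
    using fG f F[of b] \<open>a \<le> b\<close>
    by (simp add: right_diff_distrib set_integral_diff set_integral_mult_left)
  finally show ?thesis
    by (simp add: algebra_simps)
qed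

lemma L2fun_borel_measurable: "L2fun f \<Longrightarrow> f \<in> borel_measurable lborel"
  by (simp add: L2fun_def)

lemma L2fun_integrable_mult_cnj:
  fixes f g :: "real \<Rightarrow> complex"
  assumes "L2fun f" and "L2fun g"
  shows "integrable lborel (\<lambda>x. f x * cnj (g x))"
proof (rule Bochner_Integration.integrable_bound)
  show "integrable lborel (\<lambda>x. (norm (f x))\<^sup>2 + (norm (g x))\<^sup>2 :: real)"
    using assms by (simp add: L2fun_def)
  have [measurable]: "f \<in> borel_measurable lborel"
    using assms(1) by (rule L2fun_borel_measurable)
  have [measurable]: "g \<in> borel_measurable lborel"
    using assms(2) by (rule L2fun_borel_measurable)
  show "(\<lambda>x. f x * cnj (g x)) \<in> borel_measurable lborel"
    by measurable
  show "AE x in lborel. norm (f x * cnj (g x)) \<le> norm ((norm (f x))\<^sup>2 + (norm (g x))\<^sup>2 :: real)"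
  proof (rule AE_I2)
    fix x
    have "2 * (norm (f x) * norm (g x)) \<le> (norm (f x))\<^sup>2 + (norm (g x))\<^sup>2"
      using sum_squares_bound[of "norm (f x)" "norm (g x)"] by simp
    moreover have "0 \<le> norm (f x) * norm (g x)"
      by simp
    ultimately have "norm (f x) * norm (g x) \<le> (norm (f x))\<^sup>2 + (norm (g x))\<^sup>2"
      by linarith
    then show "norm (f x * cnj (g x)) \<le> norm ((norm (f x))\<^sup>2 + (norm (g x))\<^sup>2 :: real)"
      by (simp add: norm_mult)
  qed
qed

lemma L2fun_set_integrable_Icc:
  fixes f :: "real \<Rightarrow> complex"
  assumes "L2fun f"
  shows "set_integrable lborel {a..b} f"
  unfolding set_integrable_def
proof (rule Bochner_Integration.integrable_bound)
  show "integrable lborel (\<lambda>x. indicator {a..b} x + (norm (f x))\<^sup>2 :: real)"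
    using assms by (auto simp: L2fun_def integrable_indicator_iff emeasure_lborel_Icc_eq)
  have [measurable]: "f \<in> borel_measurable lborel"
    using assms by (rule L2fun_borel_measurable)
  show "(\<lambda>x. indicator {a..b} x *\<^sub>R f x) \<in> borel_measurable lborel"
    by measurable
  show "AE x in lborel. norm (indicator {a..b} x *\<^sub>R f x) \<le> norm (indicator {a..b} x + (norm (f x))\<^sup>2 :: real)"
  proof (rule AE_I2)
    fix x
    have "2 * norm (f x) \<le> 1 + (norm (f x))\<^sup>2"
      using sum_squares_bound[of 1 "norm (f x)"] by simp
    then have "norm (f x) \<le> 1 + (norm (f x))\<^sup>2"
      using norm_ge_zero[of "f x"] by linarith
    then show "norm (indicator {a..b} x *\<^sub>R f x) \<le> norm (indicator {a..b} x + (norm (f x))\<^sup>2 :: real)"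
      by (simp add: indicator_def)
  qed
qed

lemma H2_with_L2fun:
  assumes "H2_with u du ddu"
  shows "L2fun u" "L2fun du" "L2fun ddu"
  using assms by (simp_all add: H2_with_def)

lemma H2_with_set_integral_du:
  assumes "H2_with u du ddu" and "a \<le> b"
  shows "(LINT t:{a..b}|lborel. du t) = u b - u a"
proof -
  have "(du has_integral (u b - u a)) {a..b}"
    using assms by (intro fundamental_theorem_of_calculus)
      (auto simp: H2_with_def intro: has_vector_derivative_at_within)
  then show ?thesis
    using assms set_borel_integral_eq_integral(2)[OF L2fun_set_integrable_Icc[of du a b]]
    by (simp add: H2_with_L2fun integral_unique)
qed

lemma H2_with_set_integral_ddu:
  assumes "H2_with u du ddu" and "a \<le> b"
  shows "(LINT t:{a..b}|lborel. ddu t) = du b - du a"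
  using assms set_borel_integral_eq_integral(2)[OF L2fun_set_integrable_Icc[of ddu a b]]
  by (simp add: H2_with_def integral_unique)

lemma H2_with_set_integral_by_parts:
  assumes H: "H2_with u du ddu" and "a \<le> b"
  shows "(LINT t:{a..b}|lborel. cnj (u t) * ddu t) + (LINT t:{a..b}|lborel. cnj (du t) * du t)
           = cnj (u b) * du b - cnj (u a) * du a"
proof (rule set_integral_by_parts_Icc[OF _ _ _ _ _ _ \<open>a \<le> b\<close>])
  have L2: "L2fun u" "L2fun du" "L2fun ddu"
    using H by (rule H2_with_L2fun)+
  show "set_integrable lborel {a..b} (\<lambda>t. cnj (du t))"
    using integrable_cnj[OF L2fun_set_integrable_Icc[OF L2(2), unfolded set_integrable_def]]
    by (simp add: set_integrable_def)
  show "set_integrable lborel {a..b} ddu"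
    using L2(3) by (rule L2fun_set_integrable_Icc)
  show "set_integrable lborel {a..b} (\<lambda>t. cnj (u t) * ddu t)"
    "set_integrable lborel {a..b} (\<lambda>t. cnj (du t) * du t)"
    unfolding set_integrable_def using L2
    by (auto intro!: integrable_mult_indicator simp: mult.commute[of "cnj _"] L2fun_integrable_mult_cnj)
  show "(LINT s:{a..t}|lborel. cnj (du s)) = cnj (u t) - cnj (u a)" if "t \<in> {a..b}" for t
  proof -
    have "(LINT s:{a..t}|lborel. cnj (du s)) = cnj (LINT s:{a..t}|lborel. du s)"
      unfolding set_lebesgue_integral_def complex_cnj_scaleR[symmetric] by (rule Bochner_Integration.integral_cnj)
    then show ?thesis
      using H2_with_set_integral_du[OF H, of a t] that by simp
  qed
  show "(LINT t:{s..b}|lborel. ddu t) = du b - du s" if "s \<in> {a..b}" for s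
    using H2_with_set_integral_ddu[OF H, of s b] that by simp
qed

lemma H2_with_integral_Im_mult_cnj:
  assumes H: "H2_with u du ddu"
  shows "(\<integral>x. Im (ddu x * cnj (u x)) \<partial>lborel) = 0"
proof (rule integral_eq_0_if_integrable_primitive)
  have L2: "L2fun u" "L2fun du" "L2fun ddu"
    using H by (rule H2_with_L2fun)+
  show "integrable lborel (\<lambda>x. Im (ddu x * cnj (u x)))"
    using L2 by (intro integrable_Im L2fun_integrable_mult_cnj)
  show "integrable lborel (\<lambda>x. Im (du x * cnj (u x)))"
    using L2 by (intro integrable_Im L2fun_integrable_mult_cnj)
  show "(LINT x:{a..b}|lborel. Im (ddu x * cnj (u x))) = Im (du b * cnj (u b)) - Im (du a * cnj (u a))"
    if "a \<le> b" for a b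
  proof -
    have I1: "integrable lborel (\<lambda>t. indicator {a..b} t *\<^sub>R (cnj (u t) * ddu t))"
      using L2 by (intro integrable_mult_indicator) (auto simp: mult.commute L2fun_integrable_mult_cnj)
    have I2: "integrable lborel (\<lambda>t. indicator {a..b} t *\<^sub>R (cnj (du t) * du t))"
      using L2 by (intro integrable_mult_indicator) (auto simp: mult.commute L2fun_integrable_mult_cnj)
    have "Im ((LINT t:{a..b}|lborel. cnj (u t) * ddu t) + (LINT t:{a..b}|lborel. cnj (du t) * du t))
        = Im (cnj (u b) * du b - cnj (u a) * du a)"
      by (simp only: H2_with_set_integral_by_parts[OF H that])
    moreover have "Im (LINT t:{a..b}|lborel. cnj (du t) * du t) = 0"
      using integral_Im[OF I2] by (simp add: set_lebesgue_integral_def)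
    moreover have "Im (LINT t:{a..b}|lborel. cnj (u t) * ddu t) = (LINT x:{a..b}|lborel. Im (ddu x * cnj (u x)))"
      using integral_Im[OF I1] by (simp add: set_lebesgue_integral_def mult.commute)
    ultimately show ?thesis
      by (simp add: mult.commute)
  qed
qed

lemma eigen_equations_Re_identity:
  fixes lam u1 u2 a1 a2 :: complex and m v g p :: real
  assumes h1: "- \<i> * (- a1 - of_real m * u1 + of_real v * u1
                 - of_real (2 * g * p) * u1 - of_real (g * p) * u2) = lam * u1"
    and h2: "- \<i> * (of_real (g * p) * u1 + a2 + of_real m * u2
                 - of_real v * u2 + of_real (2 * g * p) * u2) = lam * u2"
  shows "Re lam * ((norm u1)\<^sup>2 + (norm u2)\<^sup>2) + Im (a1 * cnj u1) - Im (a2 * cnj u2)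
         = 2 * (g * p) * Im (u1 * cnj u2)"
proof -
  have e1: "- a1 - of_real m * u1 + of_real v * u1 - of_real (2 * g * p) * u1 - of_real (g * p) * u2
      = \<i> * lam * u1"
    using arg_cong[OF h1, of "\<lambda>z. \<i> * z"] by (simp add: algebra_simps)
  have e2: "of_real (g * p) * u1 + a2 + of_real m * u2 - of_real v * u2 + of_real (2 * g * p) * u2
      = \<i> * lam * u2"
    using arg_cong[OF h2, of "\<lambda>z. \<i> * z"] by (simp add: algebra_simps)
  have r1: "Im ((\<i> * lam * u1) * cnj u1) = Re lam * (norm u1)\<^sup>2"
    unfolding cmod_power2 by (simp add: algebra_simps power2_eq_square)
  have r2: "Im ((\<i> * lam * u2) * cnj u2) = Re lam * (norm u2)\<^sup>2"
    unfolding cmod_power2 by (simp add: algebra_simps power2_eq_square)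
  have s1: "Im ((- a1 - of_real m * u1 + of_real v * u1 - of_real (2 * g * p) * u1
      - of_real (g * p) * u2) * cnj u1) = - Im (a1 * cnj u1) + g * p * Im (u1 * cnj u2)"
    by (simp add: algebra_simps)
  have s2: "Im ((of_real (g * p) * u1 + a2 + of_real m * u2 - of_real v * u2
      + of_real (2 * g * p) * u2) * cnj u2) = g * p * Im (u1 * cnj u2) + Im (a2 * cnj u2)"
    by (simp add: algebra_simps)
  show ?thesis
    using r1 r2 s1[unfolded e1] s2[unfolded e2] by (simp add: algebra_simps)
qed

lemma eigen_equations_Re_bound:
  fixes lam u1 u2 a1 a2 :: complex and m v g p C :: real
  assumes "- \<i> * (- a1 - of_real m * u1 + of_real v * u1
                 - of_real (2 * g * p) * u1 - of_real (g * p) * u2) = lam * u1"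
    and "- \<i> * (of_real (g * p) * u1 + a2 + of_real m * u2
                 - of_real v * u2 + of_real (2 * g * p) * u2) = lam * u2"
    and "\<bar>g * p\<bar> \<le> C"
  shows "\<bar>Re lam * ((norm u1)\<^sup>2 + (norm u2)\<^sup>2) + Im (a1 * cnj u1) - Im (a2 * cnj u2)\<bar>
         \<le> C * ((norm u1)\<^sup>2 + (norm u2)\<^sup>2)"
proof -
  have "\<bar>Re lam * ((norm u1)\<^sup>2 + (norm u2)\<^sup>2) + Im (a1 * cnj u1) - Im (a2 * cnj u2)\<bar>
      = \<bar>g * p\<bar> * (2 * \<bar>Im (u1 * cnj u2)\<bar>)"
    unfolding eigen_equations_Re_identity[OF assms(1,2)] by (simp add: abs_mult)
  also have "\<dots> \<le> C * ((norm u1)\<^sup>2 + (norm u2)\<^sup>2)"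
    using assms(3) two_abs_Im_mult_cnj_le[of u1 u2] by (intro mult_mono) auto
  finally show ?thesis .
qed

lemma abs_le_if_integral_eq_mult:
  fixes k n :: "'a \<Rightarrow> real"
  assumes "integrable M k" and "integrable M n" and "AE x in M. \<bar>k x\<bar> \<le> C * n x"
    and "integral\<^sup>L M k = c * integral\<^sup>L M n" and "0 < integral\<^sup>L M n"
  shows "\<bar>c\<bar> \<le> C"
proof -
  have "\<bar>c\<bar> * integral\<^sup>L M n = \<bar>integral\<^sup>L M k\<bar>"
    using assms(4,5) by (simp add: abs_mult)
  also have "\<dots> \<le> (\<integral>x. \<bar>k x\<bar> \<partial>M)"
    by (rule integral_abs_bound)
  also have "\<dots> \<le> (\<integral>x. C * n x \<partial>M)"
    using assms(1-3) by (intro integral_mono_AE) auto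
  also have "\<dots> = C * integral\<^sup>L M n"
    by simp
  finally show ?thesis
    using assms(5) by simp
qed

lemma integral_norm_squares_pos:
  fixes u1 u2 :: "real \<Rightarrow> complex"
  assumes "L2fun u1" and "L2fun u2" and "\<not> (AE x in lborel. u1 x = 0 \<and> u2 x = 0)"
  shows "0 < (\<integral>x. (norm (u1 x))\<^sup>2 + (norm (u2 x))\<^sup>2 \<partial>lborel)"
proof -
  have int: "integrable lborel (\<lambda>x. (norm (u1 x))\<^sup>2 + (norm (u2 x))\<^sup>2)"
    using assms(1,2) by (simp add: L2fun_def)
  have "(\<integral>x. (norm (u1 x))\<^sup>2 + (norm (u2 x))\<^sup>2 \<partial>lborel) \<noteq> 0"
  proof
    assume "(\<integral>x. (norm (u1 x))\<^sup>2 + (norm (u2 x))\<^sup>2 \<partial>lborel) = 0"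
    then have "AE x in lborel. (norm (u1 x))\<^sup>2 + (norm (u2 x))\<^sup>2 = 0"
      using integral_nonneg_eq_0_iff_AE[OF int] by simp
    then have "AE x in lborel. u1 x = 0 \<and> u2 x = 0"
      by eventually_elim (simp add: add_nonneg_eq_0_iff)
    with assms(3) show False
      by simp
  qed
  moreover have "0 \<le> (\<integral>x. (norm (u1 x))\<^sup>2 + (norm (u2 x))\<^sup>2 \<partial>lborel)"
    by (rule integral_nonneg_AE) simp
  ultimately show ?thesis
    by linarith
qed

lemma disc_spec_abs_Re_le:
  assumes "lam \<in> disc_spec V G \<mu> \<phi>" and bound: "\<And>x. \<bar>G x * (\<phi> x)\<^sup>2\<bar> \<le> C"
  shows "\<bar>Re lam\<bar> \<le> C"
proof -
  obtain u1 du1 ddu1 u2 du2 ddu2 where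
    H1: "H2_with u1 du1 ddu1" and H2: "H2_with u2 du2 ddu2"
    and nonzero: "\<not> (AE x in lborel. u1 x = 0 \<and> u2 x = 0)"
    and eigen: "AE x in lborel.
         - \<i> * (- ddu1 x - of_real \<mu> * u1 x + of_real (V x) * u1 x
                 - of_real (2 * G x * (\<phi> x)^2) * u1 x - of_real (G x * (\<phi> x)^2) * u2 x)
           = lam * u1 x \<and>
         - \<i> * (of_real (G x * (\<phi> x)^2) * u1 x + ddu2 x + of_real \<mu> * u2 x
                 - of_real (V x) * u2 x + of_real (2 * G x * (\<phi> x)^2) * u2 x)
           = lam * u2 x"
    using assms(1) unfolding disc_spec_def by blast
  define n where "n x = (norm (u1 x))\<^sup>2 + (norm (u2 x))\<^sup>2" for x
  define k where "k x = Re lam * n x + Im (ddu1 x * cnj (u1 x)) - Im (ddu2 x * cnj (u2 x))" for x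
  have L2: "L2fun u1" "L2fun ddu1" "L2fun u2" "L2fun ddu2"
    using H1 H2 by (simp_all add: H2_with_L2fun)
  have n_int: "integrable lborel n"
    unfolding n_def using L2 by (simp add: L2fun_def)
  have Im_int: "integrable lborel (\<lambda>x. Im (ddu1 x * cnj (u1 x)))"
    "integrable lborel (\<lambda>x. Im (ddu2 x * cnj (u2 x)))"
    by (intro integrable_Im L2fun_integrable_mult_cnj L2)+
  show ?thesis
  proof (rule abs_le_if_integral_eq_mult)
    show "integrable lborel k"
      unfolding k_def using n_int Im_int by simp
    show "integral\<^sup>L lborel k = Re lam * integral\<^sup>L lborel n"
      unfolding k_def
      using n_int Im_int H2_with_integral_Im_mult_cnj[OF H1] H2_with_integral_Im_mult_cnj[OF H2]
      by simp
    show "AE x in lborel. \<bar>k x\<bar> \<le> C * n x"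
      using eigen unfolding k_def n_def
      by eventually_elim (use bound in \<open>blast intro: eigen_equations_Re_bound\<close>)
    show "0 < integral\<^sup>L lborel n"
      unfolding n_def using L2(1,3) nonzero by (rule integral_norm_squares_pos)
  qed (fact n_int)
qed

lemma abs_le_sup_norm: "bdd_above (range (\<lambda>x. \<bar>f x\<bar>)) \<Longrightarrow> \<bar>f x\<bar> \<le> sup_norm f"
  unfolding sup_norm_def by (rule cSup_upper) auto

lemma exp_localized_bdd_above:
  assumes "exp_localized \<phi>"
  shows "bdd_above (range (\<lambda>x. \<bar>\<phi> x\<bar>))"
proof -
  obtain C \<kappa> where "\<kappa> > 0" and C: "\<And>x. \<bar>\<phi> x\<bar> \<le> C * exp (- \<kappa> * \<bar>x\<bar>)"
    using assms unfolding exp_localized_def by blast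
  have "0 \<le> C"
    using C[of 0] by simp
  have "\<bar>\<phi> x\<bar> \<le> C" for x
  proof -
    have "C * exp (- \<kappa> * \<bar>x\<bar>) \<le> C * 1"
      using \<open>\<kappa> > 0\<close> \<open>0 \<le> C\<close> by (intro mult_left_mono) auto
    then show ?thesis
      using C[of x] by simp
  qed
  then show ?thesis
    by (intro bdd_aboveI2)
qed

lemma Gam_bdd_above: "bdd_above (range (\<lambda>x. \<bar>Gam Gp Gm x\<bar>))"
  by (rule bdd_aboveI2[where M = "\<bar>Gp\<bar> + \<bar>Gm\<bar>"]) (auto simp: Gam_def indicator_def)

theorem lemma3p1:
  fixes V \<phi> :: "real \<Rightarrow> real" and d Gp Gm \<mu> :: real and lam :: complex
  assumes "periodic_with d V"
    and "exp_localized \<phi>"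
    and "stationary_solution V (Gam Gp Gm) \<mu> \<phi>"
    and "lam \<in> disc_spec V (Gam Gp Gm) \<mu> \<phi>"
  shows "\<bar>Re lam\<bar> \<le> sup_norm (Gam Gp Gm) * (sup_norm \<phi>)^2"
proof (rule disc_spec_abs_Re_le[OF assms(4)])
  fix x
  have Gam_le: "\<bar>Gam Gp Gm x\<bar> \<le> sup_norm (Gam Gp Gm)"
    by (rule abs_le_sup_norm[OF Gam_bdd_above])
  have "\<bar>\<phi> x\<bar>\<^sup>2 \<le> (sup_norm \<phi>)\<^sup>2"
    by (intro power_mono abs_le_sup_norm exp_localized_bdd_above assms(2)) simp
  then have "\<bar>Gam Gp Gm x\<bar> * \<bar>\<phi> x\<bar>\<^sup>2 \<le> sup_norm (Gam Gp Gm) * (sup_norm \<phi>)\<^sup>2"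
    using Gam_le by (intro mult_mono) auto
  then show "\<bar>Gam Gp Gm x * (\<phi> x)\<^sup>2\<bar> \<le> sup_norm (Gam Gp Gm) * (sup_norm \<phi>)\<^sup>2"
    by (simp add: abs_mult power_abs)
qed

end
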